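(* There is a universal constant $C>0$ such that the following holds for all sufficiently large $n$. Let $p\in(0,1)$, let $A$ be an $n\times n$ random matrix with i.i.d. Bernoulli$(p)$ entries, let $m_0\le m_1\le n/2$ be positive integers, $a>0$, and let $x\in\mathbb R^n$ satisfy $x^*_{m_1}=3a$ and $x^*_{m_1}>3x^*_{n-m_1}$. Put $q=2m_0p(1-p)^{2m_0-1}$. Then $$\mathbb{P}\Big\{\|Ax\|<\sqrt{\tfrac{1}{50}qn}\,a\Big\}\le\exp\Big(-\tfrac1{40}qn\Big).$$ Moreover, if $\frac{m_1}{m_0}q>C$, then $$\mathbb{P}\Big\{\|Ax\|<\sqrt{\tfrac n4}\,a\Big\}\le2\exp\Big(-\tfrac1{12}\log\big(\lfloor m_1/m_0\rfloor q\big)\,n\Big).$$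
   Context: For $x\in\mathbb R^n$, $x^*$ is the non-increasing rearrangement of $(|x_1|,\dots,|x_n|)$. $\|\cdot\|$ is the Euclidean norm. Bernoulli$(p)$ entries equal $1$ w.p. $p$ and $0$ otherwise. *)

theory Defs
  imports "HOL-Analysis.Analysis" "HOL-Probability.Probability"
begin

definition bernoulli_matrix :: "nat \<Rightarrow> real \<Rightarrow> (nat \<times> nat \<Rightarrow> bool) pmf" where
  "bernoulli_matrix n p = Pi_pmf ({..<n} \<times> {..<n}) False (\<lambda>_. bernoulli_pmf p)"

definition mat_vec :: "nat \<Rightarrow> (nat \<times> nat \<Rightarrow> bool) \<Rightarrow> (nat \<Rightarrow> real) \<Rightarrow> nat \<Rightarrow> real" where
  "mat_vec n A x i = (\<Sum>j<n. (if A (i, j) then 1 else 0) * x j)"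

definition euclid_norm :: "nat \<Rightarrow> (nat \<Rightarrow> real) \<Rightarrow> real" where
  "euclid_norm n y = sqrt (\<Sum>i<n. (y i)\<^sup>2)"

(* non-increasing rearrangement: x^*_k (1 \<le> k \<le> n) is the k-th largest of |x_0|,...,|x_{n-1}| *)
definition rearr :: "nat \<Rightarrow> (nat \<Rightarrow> real) \<Rightarrow> nat \<Rightarrow> real" where
  "rearr n x k = rev (sort (map (\<lambda>i. \<bar>x i\<bar>) [0..<n])) ! (k - 1)"

end

(*
  Write q for the probability that 2*m0 independent Bernoulli(p) trials contain exactly one
  success. The hypotheses on the rearrangement give m1 coordinates of x with |x_i| >= 3a and
  m1 with |x_i| < a; we group them into k blocks of m big and m small coordinates. Fix one row r
  of A. Swapping, inside a block where r selects exactly one coordinate, that coordinate with its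
  partner of the other size preserves the distribution of r and moves <r, x> by more than 2a.
  Averaging over all subsets of swaps and applying the Erdos-Littlewood-Offord inequality
  (via the LYM inequality) gives P(|<r, x>| < a) <= E[binom(T, T div 2) / 2^T], where the number
  T of such blocks is Binomial(k, q). This equals 1 - q/2 for k = 1 and is O((kq)^(-1/2)) when
  k = m1 div m0. Finally ||Ax|| < sqrt(t) a forces more than n - t rows with |(Ax)_i| < a, and
  since the rows are independent, Markov's inequality for s^(number of such rows) turns the row
  estimates into the two tail bounds.
*)

theory Submission
  imports Defs
begin

section \<open>Sperner's theorem and the Littlewood--Offord inequality\<close>

lemma fact_mult_fact_eq_sum_Diff_singleton:
  assumes A: "finite A" and XA: "X \<subseteq> A" and X: "X \<noteq> {}"
  shows "fact (card X) * fact (card A - card X)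
       = (\<Sum>t\<in>X. fact (card (X - {t})) * fact (card (A - {t}) - card (X - {t})) :: nat)"
proof -
  have fX: "finite X" using XA A by (rule finite_subset)
  obtain c where c: "card X = Suc c" using X fX by (cases "card X") auto
  have "(\<Sum>t\<in>X. fact (card (X - {t})) * fact (card (A - {t}) - card (X - {t})))
      = (\<Sum>t\<in>X. fact c * fact (card A - card X) :: nat)"
    using XA fX A c by (intro sum.cong) (auto simp: card_Diff_singleton subsetD)
  then show ?thesis by (simp add: c algebra_simps)
qed

lemma antichain_Diff_singleton:
  assumes "F \<subseteq> Pow A" "\<forall>X\<in>F. \<forall>Y\<in>F. \<not> X \<subset> Y"
  shows "(\<lambda>X. X - {t}) ` {X\<in>F. t \<in> X} \<subseteq> Pow (A - {t})"
    and "\<forall>X\<in>(\<lambda>X. X - {t}) ` {X\<in>F. t \<in> X}. \<forall>Y\<in>(\<lambda>X. X - {t}) ` {X\<in>F. t \<in> X}. \<not> X \<subset> Y"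
proof -
  show "(\<lambda>X. X - {t}) ` {X\<in>F. t \<in> X} \<subseteq> Pow (A - {t})" using assms(1) by auto
  show "\<forall>X\<in>(\<lambda>X. X - {t}) ` {X\<in>F. t \<in> X}. \<forall>Y\<in>(\<lambda>X. X - {t}) ` {X\<in>F. t \<in> X}. \<not> X \<subset> Y"
  proof (intro ballI notI)
    fix X Y assume "X \<in> (\<lambda>X. X - {t}) ` {X\<in>F. t \<in> X}" "Y \<in> (\<lambda>X. X - {t}) ` {X\<in>F. t \<in> X}" "X \<subset> Y"
    then obtain X' Y' where "X' \<in> F" "Y' \<in> F" "t \<in> X'" "t \<in> Y'" "X = X' - {t}" "Y = Y' - {t}"
      by auto
    then have "X' \<subset> Y'" using \<open>X \<subset> Y\<close> by blast
    then show False using assms(2) \<open>X' \<in> F\<close> \<open>Y' \<in> F\<close> by blast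
  qed
qed

text \<open>Double counting: the weight of \<open>X\<close> splits over \<open>t \<in> X\<close> into the weights of \<open>X - {t}\<close>
  in \<open>A - {t}\<close>, and for fixed \<open>t\<close> these sets again form an antichain.\<close>

lemma lym_inequality:
  assumes "finite A" "F \<subseteq> Pow A" "\<forall>X\<in>F. \<forall>Y\<in>F. \<not> X \<subset> Y"
  shows "(\<Sum>X\<in>F. fact (card X) * fact (card A - card X)) \<le> (fact (card A) :: nat)"
  using assms
proof (induction "card A" arbitrary: A F)
  case 0
  then have "A = {}" by auto
  with 0 have "F \<subseteq> {{}}" by auto
  then show ?case by (cases "F = {}") (auto simp: \<open>A = {}\<close> dest: subset_singletonD)
next
  case (Suc n)
  have finF: "finite F" using Suc.prems by (meson finite_Pow_iff rev_finite_subset)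
  show ?case
  proof (cases "{} \<in> F")
    case True
    then have "F = {{}}" using Suc.prems(3) by blast
    then show ?thesis by simp
  next
    case False
    let ?w = "\<lambda>t X. fact (card (X - {t})) * fact (card (A - {t}) - card (X - {t})) :: nat"
    have "(\<Sum>X\<in>F. fact (card X) * fact (card A - card X))
        = (\<Sum>X\<in>F. \<Sum>t\<in>A. if t \<in> X then ?w t X else 0)"
    proof (rule sum.cong[OF refl])
      fix X assume "X \<in> F"
      then have "X \<subseteq> A" "X \<noteq> {}" "A \<inter> X = X" using Suc.prems(2) False by auto
      then show "fact (card X) * fact (card A - card X) = (\<Sum>t\<in>A. if t \<in> X then ?w t X else 0)"
        using fact_mult_fact_eq_sum_Diff_singleton[OF Suc.prems(1)]
        by (simp only: sum.inter_restrict[OF Suc.prems(1), symmetric])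
    qed
    also have "\<dots> = (\<Sum>t\<in>A. \<Sum>X\<in>F. if t \<in> X then ?w t X else 0)"
      by (rule sum.swap)
    also have "\<dots> = (\<Sum>t\<in>A. \<Sum>X\<in>{X\<in>F. t \<in> X}. ?w t X)"
      using finF by (simp only: sum.inter_filter)
    also have "\<dots> \<le> (\<Sum>t\<in>A. fact n)"
    proof (rule sum_mono)
      fix t assume t: "t \<in> A"
      have inj: "inj_on (\<lambda>X. X - {t}) {X\<in>F. t \<in> X}"
        by (rule inj_onI) (metis (no_types, lifting) insert_Diff mem_Collect_eq)
      have card_At: "card (A - {t}) = n" using Suc.hyps(2) t Suc.prems(1) by simp
      have "(\<Sum>X\<in>{X\<in>F. t \<in> X}. ?w t X)
          = (\<Sum>Y\<in>(\<lambda>X. X - {t}) ` {X\<in>F. t \<in> X}. fact (card Y) * fact (card (A - {t}) - card Y))"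
        by (subst sum.reindex[OF inj]) simp
      also have "\<dots> \<le> fact (card (A - {t}))"
        using Suc.prems(1) card_At antichain_Diff_singleton[OF Suc.prems(2,3)]
        by (intro Suc.hyps) auto
      finally show "(\<Sum>X\<in>{X\<in>F. t \<in> X}. ?w t X) \<le> fact n" by (simp add: card_At)
    qed
    also have "\<dots> = fact (card A)" by (simp flip: Suc.hyps(2))
    finally show ?thesis .
  qed
qed

theorem sperner_antichain_card:
  assumes A: "finite A" and FA: "F \<subseteq> Pow A" and anti: "\<forall>X\<in>F. \<forall>Y\<in>F. \<not> X \<subset> Y"
  shows "card F \<le> card A choose (card A div 2)"
proof -
  let ?c = "card A choose (card A div 2)"
  have "card F * fact (card A) = (\<Sum>X\<in>F. fact (card A))" by simp
  also have "\<dots> = (\<Sum>X\<in>F. fact (card X) * fact (card A - card X) * (card A choose card X))"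
    using FA A by (intro sum.cong refl binomial_fact_lemma[symmetric]) (auto intro: card_mono)
  also have "\<dots> \<le> (\<Sum>X\<in>F. fact (card X) * fact (card A - card X) * ?c)"
    by (intro sum_mono mult_left_mono binomial_maximum) auto
  also have "\<dots> \<le> fact (card A) * ?c"
    using lym_inequality[OF A FA anti] by (simp flip: sum_distrib_right)
  finally show ?thesis by (simp add: mult.commute)
qed

theorem erdos_littlewood_offord_pos:
  fixes d :: "'a \<Rightarrow> real"
  assumes A: "finite A" and d: "\<And>g. g \<in> A \<Longrightarrow> d g > 2 * a"
  shows "card {X \<in> Pow A. \<bar>c + (\<Sum>g\<in>X. d g)\<bar> < a} \<le> card A choose (card A div 2)"
    (is "card ?F \<le> _")
proof (rule sperner_antichain_card[OF A])
  show "\<forall>X\<in>?F. \<forall>Y\<in>?F. \<not> X \<subset> Y"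
  proof (intro ballI notI)
    fix X Y assume X: "X \<in> ?F" and Y: "Y \<in> ?F" and XY: "X \<subset> Y"
    have YA: "Y \<subseteq> A" and fY: "finite Y" using Y A by (auto dest: finite_subset)
    obtain g0 where g0: "g0 \<in> Y - X" using XY by auto
    have "0 \<le> d g" if "g \<in> A" for g using X d[OF that] by auto
    then have "d g0 \<le> (\<Sum>g\<in>Y - X. d g)"
      using g0 fY YA by (intro member_le_sum) auto
    also have "\<dots> = sum d Y - sum d X" using fY XY by (simp add: sum_diff psubset_imp_subset)
    finally show False using X Y d[of g0] g0 YA by (auto simp: abs_less_iff)
  qed
qed auto

theorem erdos_littlewood_offord:
  fixes d :: "'a \<Rightarrow> real"
  assumes A: "finite A" and d: "\<And>g. g \<in> A \<Longrightarrow> \<bar>d g\<bar> > 2 * a"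
  shows "card {X \<in> Pow A. \<bar>c + (\<Sum>g\<in>X. d g)\<bar> < a} \<le> card A choose (card A div 2)"
    (is "card ?F \<le> _")
proof -
  \<comment> \<open>Toggling the indices with negative weight turns every weight into its absolute value.\<close>
  define N where "N = {g\<in>A. d g < 0}"
  define flip where "flip = (\<lambda>X. (X - N) \<union> (N - X))"
  define c' where "c' = c - (\<Sum>g\<in>N. \<bar>d g\<bar>)"
  have NA: "N \<subseteq> A" and finN: "finite N" using A by (auto simp: N_def)
  have flip_sum: "c + (\<Sum>g\<in>X. d g) = c' + (\<Sum>g\<in>flip X. \<bar>d g\<bar>)" if X: "X \<subseteq> A" for X
  proof -
    have fX: "finite X" using X A by (rule finite_subset)
    have "(\<Sum>g\<in>X. d g) = (\<Sum>g\<in>X - N. \<bar>d g\<bar>) - (\<Sum>g\<in>X \<inter> N. \<bar>d g\<bar>)"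
    proof -
      have "(\<Sum>g\<in>X. d g) = (\<Sum>g\<in>X - N. d g) + (\<Sum>g\<in>X \<inter> N. d g)"
        using fX by (subst sum.union_disjoint[symmetric]) (auto intro: sum.cong)
      also have "(\<Sum>g\<in>X - N. d g) = (\<Sum>g\<in>X - N. \<bar>d g\<bar>)"
        using X by (intro sum.cong) (auto simp: N_def)
      also have "(\<Sum>g\<in>X \<inter> N. d g) = - (\<Sum>g\<in>X \<inter> N. \<bar>d g\<bar>)"
        by (simp add: N_def sum_negf[symmetric])
      finally show ?thesis by simp
    qed
    moreover have "(\<Sum>g\<in>flip X. \<bar>d g\<bar>) = (\<Sum>g\<in>X - N. \<bar>d g\<bar>) + (\<Sum>g\<in>N - X. \<bar>d g\<bar>)"
      unfolding flip_def using fX finN by (intro sum.union_disjoint) auto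
    moreover have "(\<Sum>g\<in>N. \<bar>d g\<bar>) = (\<Sum>g\<in>N - X. \<bar>d g\<bar>) + (\<Sum>g\<in>X \<inter> N. \<bar>d g\<bar>)"
      using finN by (subst sum.union_disjoint[symmetric]) (auto intro: sum.cong)
    ultimately show ?thesis unfolding c'_def by linarith
  qed
  have flip_flip: "flip (flip X) = X" for X unfolding flip_def by auto
  have "card ?F = card (flip ` ?F)"
    by (rule card_image[symmetric]) (rule inj_on_inverseI[of _ flip], rule flip_flip)
  also have "\<dots> \<le> card {Y \<in> Pow A. \<bar>c' + (\<Sum>g\<in>Y. \<bar>d g\<bar>)\<bar> < a}"
    using A NA flip_sum by (intro card_mono) (auto simp: flip_def)
  also have "\<dots> \<le> card A choose (card A div 2)"
    by (rule erdos_littlewood_offord_pos[OF A]) (use d in auto)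
  finally show ?thesis .
qed

section \<open>Central binomial probabilities\<close>

definition central_binom_prob :: "nat \<Rightarrow> real" where
  "central_binom_prob T = real (T choose (T div 2)) / 2 ^ T"

lemma central_binom_prob_nonneg: "central_binom_prob T \<ge> 0"
  unfolding central_binom_prob_def by simp

lemma central_binom_prob_le_1: "central_binom_prob T \<le> 1"
proof -
  have "real (T choose (T div 2)) \<le> real ((2::nat) ^ T)"
    by (rule of_nat_mono[OF binomial_le_pow2])
  then show ?thesis unfolding central_binom_prob_def by simp
qed

lemma central_binom_prob_odd:
  "central_binom_prob (Suc (2*m))
     = central_binom_prob (2*m) * ((2 * real m + 1) / (2 * real m + 2))"
proof -
  have "Suc m * (Suc (2*m) choose m) = Suc (2*m) * (2*m choose m)"
    using binomial_absorb_comp[of "Suc (2*m)" m] by (simp add: Suc_diff_le)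
  then have "real (Suc m) * real (Suc (2*m) choose m) = real (Suc (2*m)) * real (2*m choose m)"
    by (metis of_nat_mult)
  then have binom:
    "real (Suc (2*m) choose m) = real (2*m choose m) * (2 * real m + 1) / (real m + 1)"
    by (simp add: field_simps)
  have "Suc (2*m) div 2 = m" "2*m div 2 = m" by simp_all
  then show ?thesis
    by (simp only: central_binom_prob_def binom power_Suc) (simp add: field_simps)
qed

lemma central_binom_prob_even_Suc:
  "central_binom_prob (2 * Suc m) = central_binom_prob (Suc (2*m))"
proof -
  have "2 * Suc m choose Suc m = 2 * (Suc (2*m) choose m)"
    using binomial_symmetric[of m "Suc (2*m)"] by simp
  then show ?thesis unfolding central_binom_prob_def by simp
qed

lemma central_binom_ratio_sq_le:
  fixes k :: real assumes "k \<ge> 0"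
  shows "(1 / (2*k+1)) * ((2*k+1) / (2*k+2))^2 \<le> 1 / (2*k+3)"
proof -
  have "(2*k+1) * (2*k+3) \<le> (2*k+2)^2" by (simp add: power2_eq_square algebra_simps)
  then have "(2*k+1) / (2*k+2)^2 \<le> 1 / (2*k+3)"
    using assms by (simp add: divide_simps)
  then show ?thesis using assms by (simp add: power2_eq_square)
qed

lemma central_binom_prob_even_sq: "(central_binom_prob (2*m))^2 \<le> 1 / (2 * real m + 1)"
proof (induction m)
  case (Suc m)
  have "(central_binom_prob (2 * Suc m))^2
      = (central_binom_prob (2*m))^2 * ((2 * real m + 1) / (2 * real m + 2))^2"
    unfolding central_binom_prob_even_Suc central_binom_prob_odd by (simp only: power_mult_distrib)
  also have "\<dots> \<le> (1 / (2 * real m + 1)) * ((2 * real m + 1) / (2 * real m + 2))^2"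
    using Suc.IH by (intro mult_right_mono) auto
  also have "\<dots> \<le> 1 / (2 * real m + 3)" by (rule central_binom_ratio_sq_le) simp
  finally show ?case by (simp add: add.commute)
qed (simp add: central_binom_prob_def)

lemma central_binom_prob_sq: "(central_binom_prob T)^2 \<le> 1 / (real T + 1)"
proof (cases "even T")
  case True
  then show ?thesis using central_binom_prob_even_sq[of "T div 2"] by (simp add: real_of_nat_div)
next
  case False
  then obtain m where T: "T = Suc (2*m)" by (metis oddE Suc_eq_plus1)
  have "(central_binom_prob T)^2
      = (central_binom_prob (2*m))^2 * ((2 * real m + 1) / (2 * real m + 2))^2"
    unfolding T central_binom_prob_odd by (simp only: power_mult_distrib)
  also have "\<dots> \<le> (1 / (2 * real m + 1)) * ((2 * real m + 1) / (2 * real m + 2))^2"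
    using central_binom_prob_even_sq by (intro mult_right_mono) auto
  also have "\<dots> \<le> 1 / (2 * real m + 3)" by (rule central_binom_ratio_sq_le) simp
  also have "\<dots> \<le> 1 / (real T + 1)" unfolding T by (simp add: divide_simps)
  finally show ?thesis .
qed

lemma central_binom_prob_le_inv_sqrt: "central_binom_prob T \<le> 1 / sqrt (real T + 1)"
proof -
  have "central_binom_prob T = sqrt ((central_binom_prob T)^2)"
    using central_binom_prob_nonneg by simp
  also have "\<dots> \<le> sqrt (1 / (real T + 1))" by (intro real_sqrt_le_mono central_binom_prob_sq)
  finally show ?thesis by (simp add: real_sqrt_divide)
qed

lemma central_binom_prob_le_split:
  "central_binom_prob T \<le> 2 ^ j * (1/2) ^ T + 1 / sqrt (real j + 1)"
proof (cases "T < j")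
  case True
  have "(1::real) \<le> 2 ^ (j - T)" by simp
  also have "\<dots> = 2 ^ j * (1/2) ^ T"
    using True by (simp add: power_diff power_one_over field_simps)
  finally show ?thesis using central_binom_prob_le_1[of T] by (simp add: add_increasing2)
next
  case False
  have "central_binom_prob T \<le> 1 / sqrt (real T + 1)" by (rule central_binom_prob_le_inv_sqrt)
  also have "\<dots> \<le> 1 / sqrt (real j + 1)" using False by (intro divide_left_mono) auto
  finally show ?thesis by (simp add: add_increasing)
qed

text \<open>Only the summands indexed by \<open>A\<close> matter; the rest of \<open>B\<close> is free, which costs a
  factor \<open>2^(card G - card A)\<close>.\<close>

corollary erdos_littlewood_offord_restricted:
  fixes d :: "'a \<Rightarrow> real"
  assumes G: "finite G" and AG: "A \<subseteq> G" and d: "\<And>g. g \<in> A \<Longrightarrow> \<bar>d g\<bar> > 2 * a"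
  shows "real (card {B \<in> Pow G. \<bar>c + (\<Sum>g\<in>B \<inter> A. d g)\<bar> < a})
           \<le> central_binom_prob (card A) * 2 ^ card G"
    (is "real (card ?F) \<le> _")
proof -
  have fA: "finite A" using AG G by (rule finite_subset)
  let ?S = "{Y \<in> Pow A. \<bar>c + (\<Sum>g\<in>Y. d g)\<bar> < a}"
  have "card ?F \<le> card (?S \<times> Pow (G - A))"
  proof (rule card_inj_on_le[where f = "\<lambda>B. (B \<inter> A, B - A)"])
    show "inj_on (\<lambda>B. (B \<inter> A, B - A)) ?F"
      by (rule inj_onI) (metis Int_Diff_Un prod.inject)
    show "(\<lambda>B. (B \<inter> A, B - A)) ` ?F \<subseteq> ?S \<times> Pow (G - A)"
      by auto
    show "finite (?S \<times> Pow (G - A))" using G fA by simp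
  qed
  also have "\<dots> = card ?S * 2 ^ (card G - card A)"
    using G fA AG by (simp add: card_cartesian_product card_Pow card_Diff_subset)
  also have "\<dots> \<le> (card A choose (card A div 2)) * 2 ^ (card G - card A)"
    by (intro mult_right_mono erdos_littlewood_offord[OF fA d]) auto
  finally have "real (card ?F) \<le> real ((card A choose (card A div 2)) * 2 ^ (card G - card A))"
    by (rule of_nat_mono)
  also have "\<dots> = real (card A choose (card A div 2)) * 2 ^ (card G - card A)"
    by simp
  also have "\<dots> = central_binom_prob (card A) * 2 ^ card G"
    using card_mono[OF G AG] by (simp add: central_binom_prob_def power_diff)
  finally show ?thesis .
qed

section \<open>Product distributions\<close>

lemma finite_funs_outside_dflt:
  assumes "finite A"
  shows "finite {f :: 'a \<Rightarrow> 'b::finite. \<forall>x. x \<notin> A \<longrightarrow> f x = dflt}"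
proof -
  have "{f :: 'a \<Rightarrow> 'b. \<forall>x. x \<notin> A \<longrightarrow> f x = dflt} = PiE_dflt A dflt (\<lambda>_. UNIV)"
    by (auto simp: PiE_dflt_def)
  then show ?thesis using assms by (simp add: finite_PiE_dflt)
qed

lemma finite_set_pmf_Pi_pmf:
  fixes p :: "'a \<Rightarrow> 'b::finite pmf"
  assumes "finite A"
  shows "finite (set_pmf (Pi_pmf A dflt p))"
  by (rule finite_subset[OF set_Pi_pmf_subset[OF assms] finite_funs_outside_dflt[OF assms]])

lemma Pi_pmf_uncurry:
  fixes D :: "'c pmf"
  assumes I: "finite I" and J: "finite J"
  shows "Pi_pmf (I \<times> J) dflt (\<lambda>_. D) =
         map_pmf case_prod (Pi_pmf I (\<lambda>_. dflt) (\<lambda>_. Pi_pmf J dflt (\<lambda>_. D)))"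
proof (rule pmf_eqI)
  fix g :: "'a \<times> 'b \<Rightarrow> 'c"
  have inj: "inj (case_prod :: ('a \<Rightarrow> 'b \<Rightarrow> 'c) \<Rightarrow> _)"
    by (rule injI) (metis curry_case_prod)
  have "pmf (map_pmf case_prod (Pi_pmf I (\<lambda>_. dflt) (\<lambda>_. Pi_pmf J dflt (\<lambda>_. D)))) g
      = pmf (Pi_pmf I (\<lambda>_. dflt) (\<lambda>_. Pi_pmf J dflt (\<lambda>_. D))) (curry g)"
    using pmf_map_inj'[OF inj, of _ "curry g"] by simp
  also have "\<dots> = pmf (Pi_pmf (I \<times> J) dflt (\<lambda>_. D)) g"
    using I J by (auto simp: pmf_Pi prod.cartesian_product fun_eq_iff)
  finally show "pmf (Pi_pmf (I \<times> J) dflt (\<lambda>_. D)) g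
      = pmf (map_pmf case_prod (Pi_pmf I (\<lambda>_. dflt) (\<lambda>_. Pi_pmf J dflt (\<lambda>_. D)))) g" ..
qed

lemma expectation_prod_Pi_pmf_rows:
  fixes f :: "('b \<Rightarrow> bool) \<Rightarrow> real"
  assumes I: "finite I" and J: "finite J" and nonneg: "\<And>r. f r \<ge> 0"
  shows "measure_pmf.expectation (Pi_pmf (I \<times> J) False (\<lambda>_. D)) (\<lambda>A. \<Prod>i\<in>I. f (\<lambda>j. A (i, j)))
         = (measure_pmf.expectation (Pi_pmf J False (\<lambda>_. D)) f) ^ card I"
    (is "?E = _")
proof -
  have fin: "finite (set_pmf (Pi_pmf J False (\<lambda>_. D)))" by (rule finite_set_pmf_Pi_pmf[OF J])
  have "?E = measure_pmf.expectation (Pi_pmf I (\<lambda>_. False) (\<lambda>_. Pi_pmf J False (\<lambda>_. D)))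
               (\<lambda>h. \<Prod>i\<in>I. f (h i))"
    unfolding Pi_pmf_uncurry[OF I J] by simp
  also have "\<dots> = (\<Prod>i\<in>I. measure_pmf.expectation (Pi_pmf J False (\<lambda>_. D)) f)"
    by (rule expectation_prod_Pi_pmf[OF I])
      (auto intro: integrable_measure_pmf_finite[OF fin] nonneg)
  finally show ?thesis by simp
qed

lemma expectation_affine_indicator:
  fixes M :: "'a pmf"
  shows "measure_pmf.expectation M (\<lambda>x. c0 + c * indicator A x) = c0 + c * measure_pmf.prob M A"
proof -
  have "integrable (measure_pmf M) (\<lambda>x. c * indicator A x :: real)"
    by (intro integrable_mult_right measure_pmf.integrable_const_bound[where B=1]) auto
  then show ?thesis by (simp add: Bochner_Integration.integral_add)
qed

lemma markov_inequality_pmf: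
  fixes u :: "'a \<Rightarrow> real"
  assumes "finite (set_pmf M)" and "\<And>x. u x \<ge> 0" and "c > 0"
  shows "measure_pmf.prob M {x. u x \<ge> c} \<le> measure_pmf.expectation M u / c"
proof -
  have "measure_pmf.prob M {x\<in>space (measure_pmf M). u x \<ge> c} \<le> measure_pmf.expectation M u / c"
    by (rule integral_Markov_inequality_measure[OF integrable_measure_pmf_finite[OF assms(1)]])
      (auto simp: assms)
  then show ?thesis by simp
qed

section \<open>Symmetrisation of a single row\<close>

text \<open>A row of the matrix is re-indexed by \<open>coord\<close>: \<open>Inr (g, t)\<close> is position \<open>t < 2*m\<close>
  of group \<open>g < k\<close>, and \<open>Inl w\<close> is one of the remaining coordinates. Within a group the positions
  \<open>t < m\<close> carry large entries of \<open>x\<close> and the positions \<open>t \<ge> m\<close> small ones; \<open>partner\<close>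
  pairs them. For \<open>B \<subseteq> {..<k}\<close>, \<open>swap_groups k m B s\<close> moves the single \<open>1\<close> of every
  one-hot group \<open>g \<in> B\<close> of the 0/1 vector \<open>s\<close> to the partner position.\<close>

type_synonym coord = "nat + nat \<times> nat"

definition group_coords :: "nat set \<Rightarrow> nat \<Rightarrow> nat \<Rightarrow> coord set" where
  "group_coords W k m = Inl ` W \<union> Inr ` ({..<k} \<times> {..<2*m})"

definition partner :: "nat \<Rightarrow> nat \<Rightarrow> nat" where
  "partner m t = (if t < m then t + m else t - m)"

definition one_hot :: "nat \<Rightarrow> (coord \<Rightarrow> bool) \<Rightarrow> nat \<Rightarrow> bool" where
  "one_hot m s g = (card {t\<in>{..<2*m}. s (Inr (g, t))} = 1)"

definition swap_cond :: "nat \<Rightarrow> nat \<Rightarrow> nat set \<Rightarrow> (coord \<Rightarrow> bool) \<Rightarrow> nat \<Rightarrow> nat \<Rightarrow> bool" where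
  "swap_cond k m B s g t = (g \<in> B \<and> g < k \<and> t < 2*m \<and> one_hot m s g)"

definition swap_coord :: "nat \<Rightarrow> nat \<Rightarrow> nat set \<Rightarrow> (coord \<Rightarrow> bool) \<Rightarrow> coord \<Rightarrow> coord" where
  "swap_coord k m B s d = (case d of
      Inl w \<Rightarrow> Inl w
    | Inr (g, t) \<Rightarrow> if swap_cond k m B s g t then Inr (g, partner m t) else Inr (g, t))"

definition swap_groups :: "nat \<Rightarrow> nat \<Rightarrow> nat set \<Rightarrow> (coord \<Rightarrow> bool) \<Rightarrow> coord \<Rightarrow> bool" where
  "swap_groups k m B s = s \<circ> swap_coord k m B s"

lemma partner_lt: "t < 2*m \<Longrightarrow> partner m t < 2*m" unfolding partner_def by auto
lemma partner_partner: "t < 2*m \<Longrightarrow> partner m (partner m t) = t" unfolding partner_def by auto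

lemma card_partner: "card {t\<in>{..<2*m}. P (partner m t)} = card {t\<in>{..<2*m}. P t}"
proof -
  have "{t\<in>{..<2*m}. P (partner m t)} = partner m ` {t\<in>{..<2*m}. P t}"
  proof (intro equalityI subsetI)
    fix t assume "t \<in> {t\<in>{..<2*m}. P (partner m t)}"
    then have "t < 2*m" "P (partner m t)" by auto
    then show "t \<in> partner m ` {t\<in>{..<2*m}. P t}"
      by (intro image_eqI[of _ _ "partner m t"]) (auto simp: partner_partner partner_lt)
  next
    fix t assume "t \<in> partner m ` {t\<in>{..<2*m}. P t}"
    then obtain u where "u < 2*m" "P u" "t = partner m u" by auto
    then show "t \<in> {t\<in>{..<2*m}. P (partner m t)}" by (auto simp: partner_partner partner_lt)
  qed
  moreover have "inj_on (partner m) {t\<in>{..<2*m}. P t}"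
    by (rule inj_onI) (metis (no_types, lifting) lessThan_iff mem_Collect_eq partner_partner)
  ultimately show ?thesis by (simp add: card_image)
qed

lemma one_hot_swap_groups: "one_hot m (swap_groups k m B s) g = one_hot m s g"
proof (cases "g \<in> B \<and> g < k \<and> one_hot m s g")
  case True
  have "{t\<in>{..<2*m}. swap_groups k m B s (Inr (g, t))} = {t\<in>{..<2*m}. s (Inr (g, partner m t))}"
    using True by (auto simp: swap_groups_def swap_coord_def swap_cond_def)
  then show ?thesis unfolding one_hot_def using card_partner[of m "\<lambda>t. s (Inr (g, t))"] by simp
next
  case False
  have "{t\<in>{..<2*m}. swap_groups k m B s (Inr (g, t))} = {t\<in>{..<2*m}. s (Inr (g, t))}"
    using False by (auto simp: swap_groups_def swap_coord_def swap_cond_def)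
  then show ?thesis unfolding one_hot_def by simp
qed

lemma swap_cond_swap_groups: "swap_cond k m B (swap_groups k m B s) = swap_cond k m B s"
  by (intro ext) (simp add: swap_cond_def one_hot_swap_groups)

lemma swap_coord_swap_groups: "swap_coord k m B (swap_groups k m B s) = swap_coord k m B s"
  unfolding swap_coord_def swap_cond_swap_groups ..

lemma swap_coord_swap_coord: "swap_coord k m B s (swap_coord k m B s d) = d"
proof (cases d)
  case (Inl w) then show ?thesis by (simp add: swap_coord_def)
next
  case (Inr gt)
  obtain g t where gt: "gt = (g, t)" by (cases gt)
  show ?thesis
  proof (cases "swap_cond k m B s g t")
    case True
    then have "t < 2*m" by (simp add: swap_cond_def)
    then have "swap_cond k m B s g (partner m t)" using True by (simp add: swap_cond_def partner_lt)
    then show ?thesis using True Inr gt \<open>t < 2*m\<close> by (simp add: swap_coord_def partner_partner)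
  next
    case False then show ?thesis using Inr gt by (simp add: swap_coord_def)
  qed
qed

lemma swap_groups_swap_groups: "swap_groups k m B (swap_groups k m B s) = s"
proof -
  have "swap_groups k m B (swap_groups k m B s) = (s \<circ> swap_coord k m B s) \<circ> swap_coord k m B s"
    unfolding swap_groups_def[of k m B "swap_groups k m B s"] swap_coord_swap_groups
    by (simp add: swap_groups_def)
  also have "\<dots> = s" by (intro ext) (simp add: swap_coord_swap_coord)
  finally show ?thesis .
qed

lemma swap_coord_in_group_coords:
  "d \<in> group_coords W k m \<Longrightarrow> swap_coord k m B s d \<in> group_coords W k m"
  by (auto simp: group_coords_def swap_coord_def swap_cond_def partner_lt split: sum.splits)

lemma swap_coord_outside: "d \<notin> group_coords W k m \<Longrightarrow> swap_coord k m B s d = d"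
  by (auto simp: group_coords_def swap_coord_def swap_cond_def split: sum.splits)

lemma bij_betw_swap_coord: "bij_betw (swap_coord k m B s) (group_coords W k m) (group_coords W k m)"
  by (rule bij_betwI[where g = "swap_coord k m B s"])
    (auto simp: swap_coord_in_group_coords swap_coord_swap_coord)

lemma finite_group_coords: "finite W \<Longrightarrow> finite (group_coords W k m)"
  by (simp add: group_coords_def)

lemma map_pmf_swap_groups:
  assumes W: "finite W"
  shows "map_pmf (swap_groups k m B) (Pi_pmf (group_coords W k m) False (\<lambda>_. P))
       = Pi_pmf (group_coords W k m) False (\<lambda>_. P)" (is "map_pmf ?f ?M = ?M")
proof (rule pmf_eqI)
  fix s
  have inj: "inj ?f" by (metis injI swap_groups_swap_groups)
  have outside: "(\<forall>d. d \<notin> group_coords W k m \<longrightarrow> \<not> ?f s d)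
      \<longleftrightarrow> (\<forall>d. d \<notin> group_coords W k m \<longrightarrow> \<not> s d)"
    by (simp add: swap_groups_def swap_coord_outside)
  have "pmf (map_pmf ?f ?M) s = pmf ?M (?f s)"
    using pmf_map_inj'[OF inj, of ?M "?f s"] by (simp add: swap_groups_swap_groups)
  also have "\<dots> = pmf ?M s"
    using outside prod.reindex_bij_betw[OF bij_betw_swap_coord, of "\<lambda>d. pmf P (s d)" k m B s W]
    by (auto simp: pmf_Pi finite_group_coords[OF W] swap_groups_def)
  finally show "pmf (map_pmf ?f ?M) s = pmf ?M s" .
qed

definition coord_sum :: "nat set \<Rightarrow> nat \<Rightarrow> nat \<Rightarrow> (coord \<Rightarrow> real) \<Rightarrow> (coord \<Rightarrow> bool) \<Rightarrow> real"
  where "coord_sum W k m z s = (\<Sum>d\<in>group_coords W k m. if s d then z d else 0)"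

definition free_sum :: "nat set \<Rightarrow> (coord \<Rightarrow> real) \<Rightarrow> (coord \<Rightarrow> bool) \<Rightarrow> real"
  where "free_sum W z s = (\<Sum>w\<in>W. if s (Inl w) then z (Inl w) else 0)"

definition group_sum :: "nat \<Rightarrow> (coord \<Rightarrow> real) \<Rightarrow> (coord \<Rightarrow> bool) \<Rightarrow> nat \<Rightarrow> real"
  where "group_sum m z s g = (\<Sum>t<2*m. if s (Inr (g, t)) then z (Inr (g, t)) else 0)"

definition partner_group_sum :: "nat \<Rightarrow> (coord \<Rightarrow> real) \<Rightarrow> (coord \<Rightarrow> bool) \<Rightarrow> nat \<Rightarrow> real"
  where "partner_group_sum m z s g
    = (\<Sum>t<2*m. if s (Inr (g, partner m t)) then z (Inr (g, t)) else 0)"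

definition active_groups :: "nat \<Rightarrow> nat \<Rightarrow> (coord \<Rightarrow> bool) \<Rightarrow> nat set"
  where "active_groups k m s = {g\<in>{..<k}. one_hot m s g}"

lemma coord_sum_decompose:
  assumes W: "finite W"
  shows "coord_sum W k m z s = free_sum W z s + (\<Sum>g<k. group_sum m z s g)"
proof -
  let ?f = "\<lambda>d. if s d then z d else 0"
  have "coord_sum W k m z s = sum ?f (Inl ` W) + sum ?f (Inr ` ({..<k} \<times> {..<2*m}))"
    unfolding coord_sum_def group_coords_def using W by (intro sum.union_disjoint) auto
  also have "sum ?f (Inl ` W) = free_sum W z s"
    unfolding free_sum_def by (subst sum.reindex) (auto intro: inj_onI)
  also have "sum ?f (Inr ` ({..<k} \<times> {..<2*m})) = (\<Sum>gt\<in>{..<k} \<times> {..<2*m}. ?f (Inr gt))"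
    by (subst sum.reindex) (auto intro: inj_onI)
  also have "\<dots> = (\<Sum>g<k. group_sum m z s g)"
    unfolding group_sum_def by (subst sum.cartesian_product) (rule sum.cong, auto)
  finally show ?thesis .
qed

lemma free_sum_swap_groups: "free_sum W z (swap_groups k m B s) = free_sum W z s"
  unfolding free_sum_def swap_groups_def swap_coord_def by simp

lemma group_sum_swap_groups:
  "group_sum m z (swap_groups k m B s) g
     = (if g \<in> B \<and> g < k \<and> one_hot m s g then partner_group_sum m z s g else group_sum m z s g)"
  unfolding group_sum_def partner_group_sum_def swap_groups_def swap_coord_def swap_cond_def
  by (auto intro!: sum.cong)

lemma coord_sum_swap_groups:
  assumes W: "finite W"
  shows "coord_sum W k m z (swap_groups k m B s)
           = coord_sum W k m z s
             + (\<Sum>g\<in>B \<inter> active_groups k m s. partner_group_sum m z s g - group_sum m z s g)"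
proof -
  let ?\<delta> = "\<lambda>g. partner_group_sum m z s g - group_sum m z s g"
  have "(\<Sum>g<k. if g \<in> B \<and> one_hot m s g then partner_group_sum m z s g else group_sum m z s g)
      = (\<Sum>g<k. group_sum m z s g) + (\<Sum>g<k. if g \<in> B \<inter> active_groups k m s then ?\<delta> g else 0)"
    by (subst sum.distrib[symmetric]) (auto intro!: sum.cong simp: active_groups_def)
  also have "(\<Sum>g<k. if g \<in> B \<inter> active_groups k m s then ?\<delta> g else 0)
      = sum ?\<delta> ({..<k} \<inter> (B \<inter> active_groups k m s))"
    by (rule sum.inter_restrict[symmetric]) simp
  also have "{..<k} \<inter> (B \<inter> active_groups k m s) = B \<inter> active_groups k m s"
    by (auto simp: active_groups_def)
  finally show ?thesis
    unfolding coord_sum_decompose[OF W] free_sum_swap_groups group_sum_swap_groups by simp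
qed

lemma group_sums_one_hot:
  assumes "one_hot m s g"
  obtains t0 where "t0 < 2*m" "group_sum m z s g = z (Inr (g, t0))"
    "partner_group_sum m z s g = z (Inr (g, partner m t0))"
proof -
  obtain t0 where t0: "{t\<in>{..<2*m}. s (Inr (g, t))} = {t0}"
    using assms unfolding one_hot_def by (meson card_1_singletonE)
  then have t0_lt: "t0 < 2*m" by auto
  have "{t\<in>{..<2*m}. s (Inr (g, partner m t))} = {partner m t0}"
  proof (intro equalityI subsetI)
    fix t assume "t \<in> {t\<in>{..<2*m}. s (Inr (g, partner m t))}"
    then have "t < 2*m" "partner m t = t0" using t0 partner_lt by auto
    then show "t \<in> {partner m t0}" using partner_partner by fastforce
  qed (use t0 t0_lt in \<open>auto simp: partner_partner partner_lt\<close>)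
  then have "partner_group_sum m z s g = z (Inr (g, partner m t0))"
    unfolding partner_group_sum_def by (simp add: sum.inter_filter[symmetric])
  moreover have "group_sum m z s g = z (Inr (g, t0))"
    using t0 unfolding group_sum_def by (simp add: sum.inter_filter[symmetric])
  ultimately show thesis using that t0_lt by blast
qed

lemma partner_group_sum_gap:
  assumes a: "a > 0"
    and big: "\<And>g t. g < k \<Longrightarrow> t < m \<Longrightarrow> \<bar>z (Inr (g, t))\<bar> \<ge> 3 * a"
    and small: "\<And>g t. g < k \<Longrightarrow> m \<le> t \<Longrightarrow> t < 2*m \<Longrightarrow> \<bar>z (Inr (g, t))\<bar> < a"
    and g: "g \<in> active_groups k m s"
  shows "\<bar>partner_group_sum m z s g - group_sum m z s g\<bar> > 2 * a"
proof -
  have gk: "g < k" and one_hot: "one_hot m s g" using g by (auto simp: active_groups_def)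
  obtain t0 where t0: "t0 < 2*m" and sums: "group_sum m z s g = z (Inr (g, t0))"
    "partner_group_sum m z s g = z (Inr (g, partner m t0))"
    by (rule group_sums_one_hot[OF one_hot])
  have "\<bar>z (Inr (g, t0))\<bar> \<ge> 3 * a \<and> \<bar>z (Inr (g, partner m t0))\<bar> < a
      \<or> \<bar>z (Inr (g, t0))\<bar> < a \<and> \<bar>z (Inr (g, partner m t0))\<bar> \<ge> 3 * a"
    using big[OF gk] small[OF gk] t0 by (cases "t0 < m") (auto simp: partner_def)
  then show ?thesis unfolding sums by linarith
qed

lemma card_small_swaps_le:
  assumes W: "finite W" and a: "a > 0"
    and big: "\<And>g t. g < k \<Longrightarrow> t < m \<Longrightarrow> \<bar>z (Inr (g, t))\<bar> \<ge> 3 * a"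
    and small: "\<And>g t. g < k \<Longrightarrow> m \<le> t \<Longrightarrow> t < 2*m \<Longrightarrow> \<bar>z (Inr (g, t))\<bar> < a"
  shows "real (card {B \<in> Pow {..<k}. \<bar>coord_sum W k m z (swap_groups k m B s)\<bar> < a})
           \<le> central_binom_prob (card (active_groups k m s)) * 2 ^ k"
proof -
  have "real (card {B \<in> Pow {..<k}. \<bar>coord_sum W k m z s +
            (\<Sum>g\<in>B \<inter> active_groups k m s. partner_group_sum m z s g - group_sum m z s g)\<bar> < a})
        \<le> central_binom_prob (card (active_groups k m s)) * 2 ^ card {..<k}"
    by (rule erdos_littlewood_offord_restricted)
      (auto simp: active_groups_def
        intro: partner_group_sum_gap[where k=k and m=m and z=z, OF a big small])
  then show ?thesis by (simp add: coord_sum_swap_groups[OF W])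
qed

text \<open>Averaging over all \<open>2^k\<close> swaps, each of which preserves the distribution, reduces
  the small-ball probability to the Littlewood--Offord count for a fixed outcome.\<close>

lemma prob_coord_sum_small_le:
  fixes P :: "bool pmf"
  assumes W: "finite W" and a: "a > 0"
    and big: "\<And>g t. g < k \<Longrightarrow> t < m \<Longrightarrow> \<bar>z (Inr (g, t))\<bar> \<ge> 3 * a"
    and small: "\<And>g t. g < k \<Longrightarrow> m \<le> t \<Longrightarrow> t < 2*m \<Longrightarrow> \<bar>z (Inr (g, t))\<bar> < a"
  shows "measure_pmf.prob (Pi_pmf (group_coords W k m) False (\<lambda>_. P)) {s. \<bar>coord_sum W k m z s\<bar> < a}
         \<le> measure_pmf.expectation (Pi_pmf (group_coords W k m) False (\<lambda>_. P))
              (\<lambda>s. central_binom_prob (card (active_groups k m s)))"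
proof -
  define M where "M = Pi_pmf (group_coords W k m) False (\<lambda>_. P)"
  define E where "E = {s. \<bar>coord_sum W k m z s\<bar> < a}"
  have fin: "finite (set_pmf M)"
    unfolding M_def by (rule finite_set_pmf_Pi_pmf[OF finite_group_coords[OF W]])
  have invariant: "measure_pmf.prob M E = measure_pmf.prob M (swap_groups k m B -` E)" for B
    using arg_cong[OF map_pmf_swap_groups[OF W, of k m B P], of "\<lambda>M. measure_pmf.prob M E"]
    unfolding M_def by simp
  have "2 ^ k * measure_pmf.prob M E
      = (\<Sum>B\<in>Pow {..<k}. measure_pmf.prob M (swap_groups k m B -` E))"
    by (simp add: card_Pow flip: invariant)
  also have "\<dots> = measure_pmf.expectation M
      (\<lambda>s. \<Sum>B\<in>Pow {..<k}. indicator (swap_groups k m B -` E) s)"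
    by (subst Bochner_Integration.integral_sum) (auto intro: integrable_measure_pmf_finite[OF fin])
  also have "\<dots> \<le> measure_pmf.expectation M
      (\<lambda>s. central_binom_prob (card (active_groups k m s)) * 2 ^ k)"
  proof (intro integral_mono integrable_measure_pmf_finite[OF fin])
    fix s
    have "(\<Sum>B\<in>Pow {..<k}. indicator (swap_groups k m B -` E) s :: real)
        = real (card {B \<in> Pow {..<k}. \<bar>coord_sum W k m z (swap_groups k m B s)\<bar> < a})"
      by (simp add: indicator_def E_def sum.If_cases Int_def)
    also have "\<dots> \<le> central_binom_prob (card (active_groups k m s)) * 2 ^ k"
      by (rule card_small_swaps_le[where k=k and m=m and z=z, OF W a big small])
    finally show "(\<Sum>B\<in>Pow {..<k}. indicator (swap_groups k m B -` E) s) \<le> \<dots>" .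
  qed
  finally show ?thesis unfolding M_def E_def by simp
qed

lemma expectation_prod_groups:
  fixes f :: "(nat \<Rightarrow> bool) \<Rightarrow> real" and P :: "bool pmf"
  assumes W: "finite W" and nonneg: "\<And>r. f r \<ge> 0"
  shows "measure_pmf.expectation (Pi_pmf (group_coords W k m) False (\<lambda>_. P))
           (\<lambda>s. \<Prod>g<k. f (\<lambda>t. s (Inr (g, t))))
         = (measure_pmf.expectation (Pi_pmf {..<2*m} False (\<lambda>_. P)) f) ^ k"
proof -
  define M where "M = Pi_pmf (group_coords W k m) False (\<lambda>_. P)"
  define R :: "coord set" where "R = Inr ` ({..<k} \<times> {..<2*m})"
  define G where "G = (\<lambda>s :: (coord \<Rightarrow> bool). (\<lambda>x. if x \<in> R then s x else False) \<circ> Inr)"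
  have RD: "R \<subseteq> group_coords W k m" unfolding R_def group_coords_def by auto
  have finR: "finite R" unfolding R_def by simp
  have a: "Pi_pmf R False (\<lambda>_. P) = map_pmf (\<lambda>f x. if x \<in> R then f x else False) M"
    unfolding M_def by (rule Pi_pmf_subset[OF finite_group_coords[OF W] RD])
  have b: "Pi_pmf ({..<k} \<times> {..<2*m}) False (\<lambda>_. P)
      = map_pmf (\<lambda>g. g \<circ> Inr) (Pi_pmf R False (\<lambda>_. P))"
    by (rule Pi_pmf_bij_betw) (auto simp: R_def bij_betw_def inj_on_def)
  have c: "Pi_pmf ({..<k} \<times> {..<2*m}) False (\<lambda>_. P) = map_pmf G M"
    unfolding b a G_def by (simp add: map_pmf_comp o_def)
  have agree: "(\<Prod>g<k. f (\<lambda>t. s (Inr (g, t)))) = (\<Prod>g<k. f (\<lambda>t. G s (g, t)))"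
    if s: "s \<in> set_pmf M" for s
  proof -
    have "G s (g, t) = s (Inr (g, t))" for g t
      using subsetD[OF set_Pi_pmf_subset[OF finite_group_coords[OF W]] s[unfolded M_def]]
      by (auto simp: G_def R_def group_coords_def)
    then show ?thesis by simp
  qed
  have "measure_pmf.expectation M (\<lambda>s. \<Prod>g<k. f (\<lambda>t. s (Inr (g, t))))
      = measure_pmf.expectation M (\<lambda>s. \<Prod>g<k. f (\<lambda>t. G s (g, t)))"
    by (intro integral_cong_AE) (auto simp: AE_measure_pmf_iff agree)
  also have "\<dots> = measure_pmf.expectation (Pi_pmf ({..<k} \<times> {..<2*m}) False (\<lambda>_. P))
      (\<lambda>u. \<Prod>g\<in>{..<k}. f (\<lambda>t. u (g, t)))"
    unfolding c by simp
  also have "\<dots> = (measure_pmf.expectation (Pi_pmf {..<2*m} False (\<lambda>_. P)) f) ^ card {..<k}"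
    by (rule expectation_prod_Pi_pmf_rows) (auto intro: nonneg)
  finally show ?thesis unfolding M_def by simp
qed

text \<open>The probability that \<open>2*m\<close> independent Bernoulli\<open>(p)\<close> trials produce exactly one success;
  for \<open>m = m0\<close> this is the quantity \<open>q\<close> of the theorem.\<close>

definition one_hot_prob :: "nat \<Rightarrow> real \<Rightarrow> real" where
  "one_hot_prob m p = 2 * real m * p * (1 - p) ^ (2 * m - 1)"

lemma expectation_one_hot:
  assumes p: "0 \<le> p" "p \<le> 1"
  shows "measure_pmf.expectation (Pi_pmf {..<2*m} False (\<lambda>_. bernoulli_pmf p))
           (\<lambda>u. if card {t\<in>{..<2*m}. u t} = 1 then c1 else c0) = c0 + (c1 - c0) * one_hot_prob m p"
proof -
  have bin: "binomial_pmf (2*m) p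
      = map_pmf (\<lambda>f. card {x\<in>{..<2*m}. f x}) (Pi_pmf {..<2*m} False (\<lambda>_. bernoulli_pmf p))"
    using p by (intro binomial_pmf_altdef') auto
  have "measure_pmf.expectation (Pi_pmf {..<2*m} False (\<lambda>_. bernoulli_pmf p))
           (\<lambda>u. if card {t\<in>{..<2*m}. u t} = 1 then c1 else c0)
      = measure_pmf.expectation (binomial_pmf (2*m) p) (\<lambda>j. if j = 1 then c1 else c0)"
    unfolding bin by simp
  also have "\<dots> = measure_pmf.expectation (binomial_pmf (2*m) p)
      (\<lambda>j. c0 + (c1 - c0) * indicator {1} j)"
    by (intro Bochner_Integration.integral_cong) (auto simp: indicator_def)
  also have "\<dots> = c0 + (c1 - c0) * measure_pmf.prob (binomial_pmf (2*m) p) {1}"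
    by (rule expectation_affine_indicator)
  also have "measure_pmf.prob (binomial_pmf (2*m) p) {1} = one_hot_prob m p"
    using p by (simp add: measure_pmf_single one_hot_prob_def)
  finally show ?thesis .
qed

lemma one_hot_prob_nonneg_le_1:
  assumes "0 \<le> p" "p \<le> 1"
  shows "0 \<le> one_hot_prob m p" "one_hot_prob m p \<le> 1"
proof -
  have "pmf (binomial_pmf (2*m) p) 1 = one_hot_prob m p"
    using assms by (simp add: one_hot_prob_def)
  then show "0 \<le> one_hot_prob m p" "one_hot_prob m p \<le> 1" by (metis pmf_nonneg, metis pmf_le_1)
qed

lemma prod_half_active_groups:
  "(\<Prod>g<k. if card {t\<in>{..<2*m}. s (Inr (g, t))} = 1 then 1/2 else 1)
     = ((1/2) ^ card (active_groups k m s) :: real)"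
proof -
  have "(\<Prod>g<k. if card {t\<in>{..<2*m}. s (Inr (g, t))} = 1 then 1/2 else (1::real))
      = (\<Prod>g\<in>{..<k} \<inter> {g. one_hot m s g}. 1/2) * (\<Prod>g\<in>{..<k} \<inter> - {g. one_hot m s g}. 1)"
    unfolding one_hot_def by (rule prod.If_cases) simp
  also have "\<dots> = (1/2) ^ card (active_groups k m s)" by (simp add: active_groups_def Int_def)
  finally show ?thesis .
qed

lemma expectation_half_pow_active_groups:
  assumes W: "finite W" and p: "0 \<le> p" "p \<le> 1"
  shows "measure_pmf.expectation (Pi_pmf (group_coords W k m) False (\<lambda>_. bernoulli_pmf p))
           (\<lambda>s. (1/2::real) ^ card (active_groups k m s)) = (1 - one_hot_prob m p / 2) ^ k"
proof -
  have "measure_pmf.expectation (Pi_pmf (group_coords W k m) False (\<lambda>_. bernoulli_pmf p))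
          (\<lambda>s. (1/2::real) ^ card (active_groups k m s))
      = (measure_pmf.expectation (Pi_pmf {..<2*m} False (\<lambda>_. bernoulli_pmf p))
           (\<lambda>u. if card {t\<in>{..<2*m}. u t} = 1 then 1/2 else 1)) ^ k"
    unfolding prod_half_active_groups[symmetric] by (rule expectation_prod_groups[OF W]) simp
  also have "\<dots> = (1 - one_hot_prob m p / 2) ^ k"
    using expectation_one_hot[OF p, of m "1/2" 1] by simp
  finally show ?thesis .
qed

lemma expectation_central_binom_prob_active_le:
  assumes W: "finite W" and p: "0 \<le> p" "p \<le> 1"
  shows "measure_pmf.expectation (Pi_pmf (group_coords W k m) False (\<lambda>_. bernoulli_pmf p))
           (\<lambda>s. central_binom_prob (card (active_groups k m s)))
         \<le> 2 ^ j * (1 - one_hot_prob m p / 2) ^ k + 1 / sqrt (real j + 1)"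
proof -
  let ?M = "Pi_pmf (group_coords W k m) False (\<lambda>_. bernoulli_pmf p)"
  have fin: "finite (set_pmf ?M)" by (rule finite_set_pmf_Pi_pmf[OF finite_group_coords[OF W]])
  have "measure_pmf.expectation ?M (\<lambda>s. central_binom_prob (card (active_groups k m s)))
      \<le> measure_pmf.expectation ?M
           (\<lambda>s. 2 ^ j * (1/2) ^ card (active_groups k m s) + 1 / sqrt (real j + 1))"
    by (intro integral_mono integrable_measure_pmf_finite[OF fin] central_binom_prob_le_split)
  also have "\<dots> = 2 ^ j * (1 - one_hot_prob m p / 2) ^ k + 1 / sqrt (real j + 1)"
    by (simp add: Bochner_Integration.integral_add integrable_measure_pmf_finite[OF fin]
        expectation_half_pow_active_groups[OF W p])
  finally show ?thesis .
qed

lemma expectation_central_binom_prob_active_single: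
  assumes W: "finite W" and p: "0 \<le> p" "p \<le> 1"
  shows "measure_pmf.expectation (Pi_pmf (group_coords W 1 m) False (\<lambda>_. bernoulli_pmf p))
           (\<lambda>s. central_binom_prob (card (active_groups 1 m s))) = 1 - one_hot_prob m p / 2"
proof -
  have "central_binom_prob (card (active_groups 1 m s)) = (1/2) ^ card (active_groups 1 m s)" for s
  proof -
    have "card (active_groups 1 m s) \<le> card {0::nat}"
      by (rule card_mono) (auto simp: active_groups_def)
    then have "card (active_groups 1 m s) \<in> {0, 1}" by auto
    then show ?thesis by (auto simp: central_binom_prob_def)
  qed
  then show ?thesis using expectation_half_pow_active_groups[OF W p, of 1 m] by simp
qed

definition row_sum :: "nat \<Rightarrow> (nat \<Rightarrow> real) \<Rightarrow> (nat \<Rightarrow> bool) \<Rightarrow> real" where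
  "row_sum n x r = (\<Sum>j<n. (if r j then 1 else 0) * x j)"

definition relabel :: "(nat \<times> nat \<Rightarrow> nat) \<Rightarrow> (nat \<times> nat) set \<Rightarrow> nat \<Rightarrow> coord" where
  "relabel e KT j = (if j \<in> e ` KT then Inr (the_inv_into KT e j) else Inl j)"

lemma bij_betw_relabel:
  assumes inj: "inj_on e KT" and img: "e ` KT \<subseteq> {..<n}" and KT: "KT = {..<k} \<times> {..<2*m}"
  shows "bij_betw (relabel e KT) {..<n} (group_coords ({..<n} - e ` KT) k m)"
proof (rule bij_betw_imageI)
  show "inj_on (relabel e KT) {..<n}"
  proof (rule inj_onI)
    fix i j assume "i \<in> {..<n}" "j \<in> {..<n}" "relabel e KT i = relabel e KT j"
    then show "i = j" unfolding relabel_def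
      by (auto split: if_splits dest: arg_cong[where f = e] simp: f_the_inv_into_f[OF inj])
  qed
  show "relabel e KT ` {..<n} = group_coords ({..<n} - e ` KT) k m"
  proof (intro equalityI subsetI)
    fix d assume "d \<in> relabel e KT ` {..<n}"
    then obtain j where j: "j < n" "d = relabel e KT j" by auto
    show "d \<in> group_coords ({..<n} - e ` KT) k m"
    proof (cases "j \<in> e ` KT")
      case True
      then have "the_inv_into KT e j \<in> KT" by (rule the_inv_into_into[OF inj]) simp
      then show ?thesis using True j KT unfolding relabel_def group_coords_def by auto
    next
      case False then show ?thesis using j unfolding relabel_def group_coords_def by auto
    qed
  next
    fix d assume "d \<in> group_coords ({..<n} - e ` KT) k m"
    then consider (free) w where "w \<in> {..<n} - e ` KT" "d = Inl w"
      | (group) gt where "gt \<in> KT" "d = Inr gt"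
      unfolding group_coords_def KT by auto
    then show "d \<in> relabel e KT ` {..<n}"
    proof cases
      case free then show ?thesis unfolding relabel_def by (auto intro!: image_eqI[of _ _ w])
    next
      case group
      then have "e gt < n" using img by auto
      moreover have "relabel e KT (e gt) = d"
        using group by (simp add: relabel_def the_inv_into_f_f[OF inj])
      ultimately show ?thesis by (auto intro!: image_eqI[of _ _ "e gt"])
    qed
  qed
qed

lemma prob_row_sum_small_le:
  fixes x :: "nat \<Rightarrow> real" and e :: "nat \<times> nat \<Rightarrow> nat" and P :: "bool pmf"
  assumes inj: "inj_on e ({..<k} \<times> {..<2*m})" and img: "e ` ({..<k} \<times> {..<2*m}) \<subseteq> {..<n}"
    and a: "a > 0"
    and big: "\<And>g t. g < k \<Longrightarrow> t < m \<Longrightarrow> \<bar>x (e (g, t))\<bar> \<ge> 3 * a"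
    and small: "\<And>g t. g < k \<Longrightarrow> m \<le> t \<Longrightarrow> t < 2*m \<Longrightarrow> \<bar>x (e (g, t))\<bar> < a"
  shows "measure_pmf.prob (Pi_pmf {..<n} False (\<lambda>_. P)) {r. \<bar>row_sum n x r\<bar> < a}
         \<le> measure_pmf.expectation
              (Pi_pmf (group_coords ({..<n} - e ` ({..<k} \<times> {..<2*m})) k m) False (\<lambda>_. P))
              (\<lambda>s. central_binom_prob (card (active_groups k m s)))"
proof -
  define KT where "KT = {..<k} \<times> {..<2*m}"
  define W where "W = {..<n} - e ` KT"
  define h where "h = relabel e KT"
  define z where "z = (\<lambda>d. case d of Inl j \<Rightarrow> x j | Inr gt \<Rightarrow> x (e gt))"
  have injKT: "inj_on e KT" using inj unfolding KT_def .
  have bij: "bij_betw h {..<n} (group_coords W k m)"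
    unfolding h_def W_def using bij_betw_relabel[OF injKT _ KT_def] img by (simp add: KT_def)
  have out: "h j \<notin> group_coords W k m" if "j \<notin> {..<n}" for j
  proof -
    have "j \<notin> e ` KT" using that img unfolding KT_def by auto
    then show ?thesis using that unfolding h_def relabel_def group_coords_def W_def by auto
  qed
  have Pi: "Pi_pmf {..<n} False (\<lambda>_. P)
      = map_pmf (\<lambda>s. s \<circ> h) (Pi_pmf (group_coords W k m) False (\<lambda>_. P))"
    by (rule Pi_pmf_bij_betw[OF _ bij out]) simp
  have row_sum_relabel: "row_sum n x (s \<circ> h) = coord_sum W k m z s" for s
  proof -
    have "z (h j) = x j" if "j < n" for j
      unfolding z_def h_def relabel_def by (auto simp: f_the_inv_into_f[OF injKT])
    then have "row_sum n x (s \<circ> h) = (\<Sum>j<n. (\<lambda>d. if s d then z d else 0) (h j))"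
      unfolding row_sum_def by (intro sum.cong) auto
    also have "\<dots> = (\<Sum>d\<in>group_coords W k m. if s d then z d else 0)"
      by (rule sum.reindex_bij_betw[OF bij])
    finally show ?thesis unfolding coord_sum_def .
  qed
  have "measure_pmf.prob (Pi_pmf {..<n} False (\<lambda>_. P)) {r. \<bar>row_sum n x r\<bar> < a}
      = measure_pmf.prob (Pi_pmf (group_coords W k m) False (\<lambda>_. P)) {s. \<bar>coord_sum W k m z s\<bar> < a}"
    unfolding Pi by (simp add: row_sum_relabel vimage_def)
  also have "\<dots> \<le> measure_pmf.expectation (Pi_pmf (group_coords W k m) False (\<lambda>_. P))
      (\<lambda>s. central_binom_prob (card (active_groups k m s)))"
    by (rule prob_coord_sum_small_le) (auto simp: W_def z_def intro: a big small)
  finally show ?thesis unfolding W_def KT_def .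
qed

lemma exists_group_embedding:
  assumes Bg: "finite Bg" "k * m \<le> card Bg" and Sm: "finite Sm" "k * m \<le> card Sm"
    and disj: "Bg \<inter> Sm = {}"
  obtains e where "inj_on e ({..<k} \<times> {..<2*m})" "e ` ({..<k} \<times> {..<2*m}) \<subseteq> Bg \<union> Sm"
    "\<And>g t. g < k \<Longrightarrow> t < m \<Longrightarrow> e (g, t) \<in> Bg"
    "\<And>g t. g < k \<Longrightarrow> m \<le> t \<Longrightarrow> t < 2*m \<Longrightarrow> e (g, t) \<in> Sm"
proof -
  have card_KM: "card ({..<k} \<times> {..<m}) = k * m" by (simp add: card_cartesian_product)
  obtain eB where eB: "eB ` ({..<k} \<times> {..<m}) \<subseteq> Bg" "inj_on eB ({..<k} \<times> {..<m})"
    using card_le_inj[of "{..<k} \<times> {..<m}" Bg] Bg card_KM by auto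
  obtain eS where eS: "eS ` ({..<k} \<times> {..<m}) \<subseteq> Sm" "inj_on eS ({..<k} \<times> {..<m})"
    using card_le_inj[of "{..<k} \<times> {..<m}" Sm] Sm card_KM by auto
  define e where "e = (\<lambda>(g, t). if t < m then eB (g, t) else eS (g, t - m))"
  have inB: "e (g, t) \<in> Bg" if "g < k" "t < m" for g t using that eB(1) by (auto simp: e_def)
  have inS: "e (g, t) \<in> Sm" if "g < k" "m \<le> t" "t < 2*m" for g t
    using that eS(1) by (auto simp: e_def)
  have inj: "inj_on e ({..<k} \<times> {..<2*m})"
  proof (rule inj_onI)
    fix u v assume "u \<in> {..<k} \<times> {..<2*m}" "v \<in> {..<k} \<times> {..<2*m}" and eq_uv: "e u = e v"
    then obtain g t g' t' where uv: "u = (g, t)" "v = (g', t')"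
      and gt: "g < k" "t < 2*m" "g' < k" "t' < 2*m" by auto
    have eq: "e (g, t) = e (g', t')" using eq_uv uv by simp
    consider "t < m" "t' < m" | "m \<le> t" "m \<le> t'" | "t < m" "m \<le> t'" | "m \<le> t" "t' < m"
      by linarith
    then have "(g, t) = (g', t')"
    proof cases
      case 1 then show ?thesis using eq gt inj_onD[OF eB(2)] by (auto simp: e_def)
    next
      case 2
      then have "(g, t - m) = (g', t' - m)" using eq gt inj_onD[OF eS(2)] by (auto simp: e_def)
      then show ?thesis using 2 by auto
    next
      case 3
      then have "e (g, t) \<in> Bg" "e (g', t') \<in> Sm" using gt inB inS by auto
      then show ?thesis using eq disj by auto
    next
      case 4
      then have "e (g, t) \<in> Sm" "e (g', t') \<in> Bg" using gt inB inS by auto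
      then show ?thesis using eq disj by auto
    qed
    then show "u = v" using uv by simp
  qed
  have img: "e ` ({..<k} \<times> {..<2*m}) \<subseteq> Bg \<union> Sm"
  proof (rule image_subsetI)
    fix u assume "u \<in> {..<k} \<times> {..<2*m}"
    then show "e u \<in> Bg \<union> Sm" using inB inS by (cases u, cases "snd u < m") auto
  qed
  show thesis by (rule that[OF inj img inB inS])
qed

lemma prob_row_sum_small_le_active:
  fixes x :: "nat \<Rightarrow> real"
  assumes a: "a > 0"
    and km: "k * m \<le> card {i\<in>{..<n}. 3 * a \<le> \<bar>x i\<bar>}" "k * m \<le> card {i\<in>{..<n}. \<bar>x i\<bar> < a}"
  shows "\<exists>W. finite W \<and> measure_pmf.prob (Pi_pmf {..<n} False (\<lambda>_. P)) {r. \<bar>row_sum n x r\<bar> < a}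
         \<le> measure_pmf.expectation (Pi_pmf (group_coords W k m) False (\<lambda>_. P))
              (\<lambda>s. central_binom_prob (card (active_groups k m s)))"
proof -
  define Bg where "Bg = {i\<in>{..<n}. 3 * a \<le> \<bar>x i\<bar>}"
  define Sm where "Sm = {i\<in>{..<n}. \<bar>x i\<bar> < a}"
  have disj: "Bg \<inter> Sm = {}" unfolding Bg_def Sm_def using a by auto
  have "finite Bg" "finite Sm" by (simp_all add: Bg_def Sm_def)
  then obtain e where e: "inj_on e ({..<k} \<times> {..<2*m})" "e ` ({..<k} \<times> {..<2*m}) \<subseteq> Bg \<union> Sm"
      "\<And>g t. g < k \<Longrightarrow> t < m \<Longrightarrow> e (g, t) \<in> Bg"
      "\<And>g t. g < k \<Longrightarrow> m \<le> t \<Longrightarrow> t < 2*m \<Longrightarrow> e (g, t) \<in> Sm"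
    using exists_group_embedding[of Bg k m Sm] disj km[folded Bg_def Sm_def] by blast
  have img: "e ` ({..<k} \<times> {..<2*m}) \<subseteq> {..<n}" using e(2) by (auto simp: Bg_def Sm_def)
  have big: "\<bar>x (e (g, t))\<bar> \<ge> 3 * a" if "g < k" "t < m" for g t
    using e(3)[OF that] by (simp add: Bg_def)
  have small: "\<bar>x (e (g, t))\<bar> < a" if "g < k" "m \<le> t" "t < 2*m" for g t
    using e(4)[OF that] by (simp add: Sm_def)
  show ?thesis
    using prob_row_sum_small_le[where x=x and P=P, OF e(1) img a big small]
    by (intro exI[of _ "{..<n} - e ` ({..<k} \<times> {..<2*m})"]) simp
qed

section \<open>The non-increasing rearrangement\<close>

lemma rearr_sorted_list:
  fixes x :: "nat \<Rightarrow> real" and n :: nat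
  defines "L \<equiv> rev (sort (map (\<lambda>i. \<bar>x i\<bar>) [0..<n]))"
  shows "length L = n" and "\<And>i j. i \<le> j \<Longrightarrow> j < n \<Longrightarrow> L ! j \<le> L ! i"
    and "\<And>P. card {i\<in>{..<n}. P \<bar>x i\<bar>} = card {i. i < n \<and> P (L ! i)}"
    and "\<And>k. rearr n x k = L ! (k - 1)"
proof -
  show len: "length L = n" unfolding L_def by simp
  have sw: "sorted_wrt (\<lambda>a b. b \<le> a) L" unfolding L_def sorted_wrt_rev
    using sorted_sort[of "map (\<lambda>i. \<bar>x i\<bar>) [0..<n]"] by simp
  show "\<And>i j. i \<le> j \<Longrightarrow> j < n \<Longrightarrow> L ! j \<le> L ! i"
  proof -
    fix i j :: nat assume "i \<le> j" "j < n"
    then show "L ! j \<le> L ! i"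
    proof (cases "i = j")
      case False
      then have "i < j" using \<open>i \<le> j\<close> by simp
      then show ?thesis using sorted_wrt_nth_less[OF sw _ ] \<open>j < n\<close> len by auto
    qed simp
  qed
  show "\<And>P. card {i\<in>{..<n}. P \<bar>x i\<bar>} = card {i. i < n \<and> P (L ! i)}"
  proof -
    fix P :: "real \<Rightarrow> bool"
    have "card {i. i < n \<and> P (L ! i)} = length (filter P L)"
      using length_filter_conv_card[of P L] len by simp
    also have "\<dots> = length (filter P (map (\<lambda>i. \<bar>x i\<bar>) [0..<n]))"
      unfolding L_def by (simp add: filter_sort rev_filter[symmetric])
    also have "\<dots> = card {i. i < n \<and> P (map (\<lambda>i. \<bar>x i\<bar>) [0..<n] ! i)}"
      by (simp add: length_filter_conv_card)
    also have "\<dots> = card {i\<in>{..<n}. P \<bar>x i\<bar>}"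
      by (intro arg_cong[where f = card]) auto
    finally show "card {i\<in>{..<n}. P \<bar>x i\<bar>} = card {i. i < n \<and> P (L ! i)}" by simp
  qed
  show "\<And>k. rearr n x k = L ! (k - 1)" unfolding rearr_def L_def ..
qed

lemma card_ge_of_rearr_ge:
  fixes x :: "nat \<Rightarrow> real"
  assumes "1 \<le> k" "k \<le> n" "rearr n x k \<ge> c"
  shows "card {i\<in>{..<n}. c \<le> \<bar>x i\<bar>} \<ge> k"
proof -
  define L where "L = rev (sort (map (\<lambda>i. \<bar>x i\<bar>) [0..<n]))"
  note R = rearr_sorted_list[where x=x and n=n, folded L_def]
  have "{..<k} \<subseteq> {i. i < n \<and> c \<le> L ! i}"
  proof
    fix i assume "i \<in> {..<k}"
    then have "i \<le> k - 1" "k - 1 < n" using assms by auto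
    then have "L ! (k - 1) \<le> L ! i" by (rule R(2))
    moreover have "L ! (k - 1) \<ge> c" using assms(3) R(4) by simp
    ultimately show "i \<in> {i. i < n \<and> c \<le> L ! i}" using \<open>i \<le> k - 1\<close> \<open>k - 1 < n\<close> by auto
  qed
  then have "card {..<k} \<le> card {i. i < n \<and> c \<le> L ! i}" by (rule card_mono[rotated]) simp
  then show ?thesis using R(3)[of "\<lambda>v. c \<le> v"] by simp
qed

lemma card_lt_of_rearr_lt:
  fixes x :: "nat \<Rightarrow> real"
  assumes "1 \<le> k" "k \<le> n" "rearr n x k < c"
  shows "card {i\<in>{..<n}. \<bar>x i\<bar> < c} \<ge> n - k + 1"
proof -
  define L where "L = rev (sort (map (\<lambda>i. \<bar>x i\<bar>) [0..<n]))"
  note R = rearr_sorted_list[where x=x and n=n, folded L_def]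
  have "{k - 1..<n} \<subseteq> {i. i < n \<and> L ! i < c}"
  proof
    fix i assume "i \<in> {k - 1..<n}"
    then have "k - 1 \<le> i" "i < n" by auto
    then have "L ! i \<le> L ! (k - 1)" by (rule R(2))
    moreover have "L ! (k - 1) < c" using assms(3) R(4) by simp
    ultimately show "i \<in> {i. i < n \<and> L ! i < c}" using \<open>i < n\<close> by auto
  qed
  then have "card {k - 1..<n} \<le> card {i. i < n \<and> L ! i < c}" by (rule card_mono[rotated]) simp
  then show ?thesis using R(3)[of "\<lambda>v. v < c"] assms by simp
qed

lemma card_big_small_of_rearr:
  fixes x :: "nat \<Rightarrow> real"
  assumes m: "1 \<le> m" "2 * m \<le> n" and r: "rearr n x m = 3 * a" "rearr n x m > 3 * rearr n x (n - m)"
  shows "m \<le> card {i\<in>{..<n}. 3 * a \<le> \<bar>x i\<bar>}" "m \<le> card {i\<in>{..<n}. \<bar>x i\<bar> < a}"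
proof -
  show "m \<le> card {i\<in>{..<n}. 3 * a \<le> \<bar>x i\<bar>}"
    using card_ge_of_rearr_ge[where k=m and n=n and x=x and c="3 * a"] m r by simp
  have "n - (n - m) + 1 \<le> card {i\<in>{..<n}. \<bar>x i\<bar> < a}"
    using card_lt_of_rearr_lt[where k="n - m" and n=n and x=x and c=a] m r by simp
  then show "m \<le> card {i\<in>{..<n}. \<bar>x i\<bar> < a}" using m by simp
qed

section \<open>From rows to the matrix\<close>

lemma mat_vec_eq_row_sum: "mat_vec n A x i = row_sum n x (\<lambda>j. A (i, j))"
  unfolding mat_vec_def row_sum_def ..

lemma prod_if_eq_power: "finite A \<Longrightarrow> (\<Prod>i\<in>A. if P i then c else 1) = c ^ card {i\<in>A. P i}"
  by (simp add: prod.If_cases Int_def)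

lemma card_small_coords_of_norm_lt:
  fixes y :: "nat \<Rightarrow> real"
  assumes a: "a > 0" and lt: "euclid_norm n y < sqrt t * a"
  shows "real n - t < real (card {i\<in>{..<n}. \<bar>y i\<bar> < a})"
proof -
  define G where "G = {i\<in>{..<n}. \<not> \<bar>y i\<bar> < a}"
  have "real (card G) * a^2 = (\<Sum>i\<in>G. a^2)" by simp
  also have "\<dots> \<le> (\<Sum>i\<in>G. (y i)^2)"
  proof (rule sum_mono)
    fix i assume "i \<in> G"
    then have "a \<le> \<bar>y i\<bar>" unfolding G_def by auto
    then show "a^2 \<le> (y i)^2" using a by (metis abs_of_pos abs_le_square_iff)
  qed
  also have "\<dots> \<le> (\<Sum>i<n. (y i)^2)" by (rule sum_mono2) (auto simp: G_def)
  also have "\<dots> < t * a^2"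
  proof -
    have "sqrt (\<Sum>i<n. (y i)^2) < sqrt (t * a^2)"
      using lt a unfolding euclid_norm_def by (simp add: real_sqrt_mult)
    then show ?thesis by simp
  qed
  finally have "real (card G) < t" using a by simp
  have "card G + card {i\<in>{..<n}. \<bar>y i\<bar> < a} = card (G \<union> {i\<in>{..<n}. \<bar>y i\<bar> < a})"
    unfolding G_def by (rule card_Un_disjoint[symmetric]) auto
  moreover have "G \<union> {i\<in>{..<n}. \<bar>y i\<bar> < a} = {..<n}" unfolding G_def by auto
  ultimately have "real (card G) + real (card {i\<in>{..<n}. \<bar>y i\<bar> < a}) = real n"
    by (metis card_lessThan of_nat_add)
  with \<open>real (card G) < t\<close> show ?thesis by linarith
qed

text \<open>The rows of a Bernoulli matrix are independent, so the expectation of \<open>s\<close> to the number of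
  small rows factorises over the rows; Markov's inequality then gives the tail bound.\<close>

lemma prob_many_small_rows_le:
  fixes x :: "nat \<Rightarrow> real"
  assumes row: "measure_pmf.prob (Pi_pmf {..<n} False (\<lambda>_. bernoulli_pmf p))
      {r. \<bar>row_sum n x r\<bar> < a} \<le> \<rho>"
    and s: "s \<ge> 1"
  shows "measure_pmf.prob (bernoulli_matrix n p)
           {A. t \<le> real (card {i\<in>{..<n}. \<bar>mat_vec n A x i\<bar> < a})}
         \<le> (1 + (s - 1) * \<rho>) ^ n / s powr t"
    (is "measure_pmf.prob _ ?E \<le> _")
proof -
  define R where "R = Pi_pmf {..<n} False (\<lambda>_. bernoulli_pmf p)"
  define f where "f = (\<lambda>r. if \<bar>row_sum n x r\<bar> < a then s else (1::real))"
  define u where "u = (\<lambda>A. s ^ card {i\<in>{..<n}. \<bar>mat_vec n A x i\<bar> < a})"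
  have u: "u A = (\<Prod>i<n. f (\<lambda>j. A (i, j)))" for A
  proof -
    have "(\<Prod>i<n. f (\<lambda>j. A (i, j))) = (\<Prod>i<n. if \<bar>mat_vec n A x i\<bar> < a then s else 1)"
      by (simp add: f_def mat_vec_eq_row_sum)
    then show ?thesis unfolding u_def by (simp add: prod_if_eq_power)
  qed
  have f0: "f r \<ge> 0" for r unfolding f_def using s by simp
  have Ef: "measure_pmf.expectation R f \<le> 1 + (s - 1) * \<rho>"
  proof -
    have "measure_pmf.expectation R f
        = measure_pmf.expectation R (\<lambda>r. 1 + (s - 1) * indicator {r. \<bar>row_sum n x r\<bar> < a} r)"
      unfolding f_def by (intro Bochner_Integration.integral_cong) (auto simp: indicator_def)
    also have "\<dots> \<le> 1 + (s - 1) * \<rho>"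
      using row s unfolding R_def expectation_affine_indicator
      by (intro add_left_mono mult_left_mono) auto
    finally show ?thesis .
  qed
  have "?E \<subseteq> {A. s powr t \<le> u A}"
    using s by (auto simp: u_def powr_realpow[symmetric] intro: powr_mono)
  then have "measure_pmf.prob (bernoulli_matrix n p) ?E
      \<le> measure_pmf.prob (bernoulli_matrix n p) {A. s powr t \<le> u A}"
    by (rule measure_pmf.finite_measure_mono) simp
  also have "\<dots> \<le> measure_pmf.expectation (bernoulli_matrix n p) u / s powr t"
    using s by (intro markov_inequality_pmf)
      (auto simp: u_def bernoulli_matrix_def finite_set_pmf_Pi_pmf)
  also have "measure_pmf.expectation (bernoulli_matrix n p) u
      = (measure_pmf.expectation R f) ^ card {..<n}"
    unfolding u bernoulli_matrix_def R_def by (rule expectation_prod_Pi_pmf_rows) (simp_all add: f0)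
  also have "\<dots> \<le> (1 + (s - 1) * \<rho>) ^ n"
    unfolding card_lessThan by (intro power_mono Ef Bochner_Integration.integral_nonneg f0)
  finally show ?thesis using s by (simp add: divide_right_mono)
qed

section \<open>Numerical estimates\<close>

lemma first_bound_arith:
  assumes q: "0 \<le> q" "q \<le> 1"
  shows "(2 - q/2) ^ n / 2 powr (real n - q * real n / 50) \<le> exp (- (q * real n / 40))"
proof -
  define t where "t = q * real n / 50"
  have t0: "t \<ge> 0" unfolding t_def using q by simp
  have "(2 - q/2) ^ n / 2 powr (real n - t) = 2 powr t * (1 - q/4) ^ n"
  proof -
    have "(2 - q/2) ^ n = 2 ^ n * (1 - q/4) ^ n" by (simp flip: power_mult_distrib)
    moreover have "2 powr (real n - t) = 2 ^ n / 2 powr t" by (simp add: powr_diff powr_realpow)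
    ultimately show ?thesis by simp
  qed
  also have "\<dots> \<le> exp t * exp (- q * real n / 4)"
  proof (rule mult_mono)
    have "t * ln 2 \<le> t" using t0 ln_2_less_1 by (intro mult_left_le) auto
    then show "2 powr t \<le> exp t" by (simp add: powr_def mult.commute)
    have "(1 - q/4) ^ n \<le> exp (- q/4) ^ n"
      using q by (intro power_mono) (auto simp: exp_ge_add_one_self[of "-q/4", simplified])
    then show "(1 - q/4) ^ n \<le> exp (- q * real n / 4)"
      by (simp add: exp_of_nat_mult[symmetric] mult.commute)
  qed (use q in auto)
  also have "\<dots> \<le> exp (- (q * real n / 40))" unfolding t_def using q by (simp flip: exp_add)
  finally show ?thesis unfolding t_def .
qed

lemma sqrt_le_exp_quarter:
  fixes L :: real
  assumes "L \<ge> 16"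
  shows "sqrt L \<le> exp (L/4)"
proof -
  have "L * 16 \<le> L * L" using assms by (intro mult_left_mono) auto
  then have "sqrt L \<le> sqrt ((L/4)^2)" by (intro real_sqrt_le_mono) (simp add: power2_eq_square)
  also have "\<dots> = L/4" using assms by simp
  also have "\<dots> \<le> exp (L/4)" using exp_ge_add_one_self[of "L/4"] by linarith
  finally show ?thesis .
qed

lemma split_bound_arith:
  fixes L q :: real and k :: nat
  assumes L: "L \<ge> 4096" and q: "0 \<le> q" "q \<le> 1" and Lk: "L = real k * q"
  shows "2 ^ nat \<lfloor>L/4\<rfloor> * (1 - q/2) ^ k + 1 / sqrt (real (nat \<lfloor>L/4\<rfloor>) + 1) \<le> 3 / sqrt L"
proof -
  define j where "j = nat \<lfloor>L/4\<rfloor>"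
  have j1: "real j \<le> L/4" unfolding j_def using L by linarith
  have j2: "real j + 1 \<ge> L/4" unfolding j_def using L by linarith
  have sL: "sqrt L > 0" using L by simp
  have "(1 - q/2) ^ k \<le> exp (- q/2) ^ k"
    using q by (intro power_mono) (auto simp: exp_ge_add_one_self[of "-q/2", simplified])
  also have "\<dots> = exp (- L/2)" unfolding Lk by (simp add: exp_of_nat_mult[symmetric] mult.commute)
  finally have a: "(1 - q/2) ^ k \<le> exp (- L/2)" .
  have "(2::real) ^ j \<le> exp 1 ^ j"
    using exp_ge_add_one_self[of 1] by (intro power_mono) auto
  also have "\<dots> = exp (real j)" by (simp add: exp_of_nat_mult[symmetric])
  also have "\<dots> \<le> exp (L/4)" using j1 by simp
  finally have b: "(2::real) ^ j \<le> exp (L/4)" .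
  have "2 ^ j * (1 - q/2) ^ k \<le> exp (L/4) * exp (- L/2)"
    using a b q by (intro mult_mono) auto
  also have "\<dots> = exp (- (L/4))" by (simp add: exp_add[symmetric])
  also have "\<dots> \<le> 1 / sqrt L"
    using sqrt_le_exp_quarter[of L] L sL by (simp add: exp_minus field_simps)
  finally have c: "2 ^ j * (1 - q/2) ^ k \<le> 1 / sqrt L" .
  have "sqrt (L/4) \<le> sqrt (real j + 1)" using j2 by simp
  then have "sqrt L / 2 \<le> sqrt (real j + 1)" by (simp add: real_sqrt_divide)
  then have d: "1 / sqrt (real j + 1) \<le> 2 / sqrt L" using sL by (simp add: field_simps)
  show ?thesis using c d unfolding j_def[symmetric] by simp
qed

lemma second_bound_base_arith:
  fixes L \<rho> :: real
  assumes L: "L \<ge> 4096" and \<rho>: "0 \<le> \<rho>" "\<rho> \<le> 3 / sqrt L"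
  shows "1 + (L powr (1/3) - 1) * \<rho> \<le> L powr (1/6)"
proof -
  define v where "v = L powr (1/6)"
  have v4: "v \<ge> 4"
  proof -
    have "(4096::real) powr (1/6) = (4 powr 6) powr (1/6)" by simp
    also have "\<dots> = 4" by (simp add: powr_powr)
    finally have "(4096::real) powr (1/6) = 4" .
    moreover have "(4096::real) powr (1/6) \<le> L powr (1/6)" using L by (intro powr_mono2) auto
    ultimately show ?thesis unfolding v_def by simp
  qed
  have "L powr (1/3) = v * v" unfolding v_def by (simp add: powr_add[symmetric])
  moreover have "sqrt L = v * v * v"
    unfolding v_def using L by (simp add: powr_add[symmetric] powr_half_sqrt[symmetric])
  ultimately have "(L powr (1/3) - 1) * \<rho> \<le> (v * v) * (3 / (v * v * v))"
    using \<rho> v4 by (intro mult_mono) auto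
  also have "\<dots> = 3 / v" using v4 by (simp add: field_simps)
  also have "\<dots> \<le> 3 / 4" using v4 by (intro divide_left_mono) auto
  also have "\<dots> \<le> v - 1" using v4 by simp
  finally show ?thesis unfolding v_def by simp
qed

lemma second_bound_arith:
  fixes L \<rho> :: real
  assumes L: "L \<ge> 4096" and \<rho>: "0 \<le> \<rho>" "\<rho> \<le> 3 / sqrt L"
  shows "(1 + (L powr (1/3) - 1) * \<rho>) ^ n / (L powr (1/3)) powr (3 * real n / 4)
           \<le> 2 * exp (- (ln L * real n / 12))"
proof -
  have L0: "L > 0" using L by simp
  have "0 \<le> 1 + (L powr (1/3) - 1) * \<rho>"
    using L \<rho> by (simp add: ge_one_powr_ge_zero)
  then have "(1 + (L powr (1/3) - 1) * \<rho>) ^ n \<le> (L powr (1/6)) ^ n"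
    by (intro power_mono second_bound_base_arith[OF L \<rho>])
  also have "\<dots> = L powr (real n / 6)" using L0 by (simp add: powr_realpow[symmetric] powr_powr)
  finally have "(1 + (L powr (1/3) - 1) * \<rho>) ^ n / (L powr (1/3)) powr (3 * real n / 4)
      \<le> L powr (real n / 6) / L powr (real n / 4)"
    using L0 by (simp add: powr_powr divide_right_mono)
  also have "\<dots> = exp (- (ln L * real n / 12))"
    using L0 by (simp add: powr_def algebra_simps flip: exp_diff)
  finally show ?thesis using exp_ge_zero[of "- (ln L * real n / 12)"] by linarith
qed

section \<open>The two small-ball estimates\<close>

lemma prob_norm_small_le_first:
  fixes x :: "nat \<Rightarrow> real"
  assumes p: "0 \<le> p" "p \<le> 1" and a: "a > 0"
    and counts: "m \<le> card {i\<in>{..<n}. 3 * a \<le> \<bar>x i\<bar>}" "m \<le> card {i\<in>{..<n}. \<bar>x i\<bar> < a}"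
  shows "measure_pmf.prob (bernoulli_matrix n p)
           {A. euclid_norm n (mat_vec n A x) < sqrt (one_hot_prob m p * real n / 50) * a}
         \<le> exp (- (one_hot_prob m p * real n / 40))"
    (is "measure_pmf.prob _ ?E \<le> _")
proof -
  define q where "q = one_hot_prob m p"
  define \<rho> where
    "\<rho> = measure_pmf.prob (Pi_pmf {..<n} False (\<lambda>_. bernoulli_pmf p)) {r. \<bar>row_sum n x r\<bar> < a}"
  obtain W where "finite W"
    and "\<rho> \<le> measure_pmf.expectation (Pi_pmf (group_coords W 1 m) False (\<lambda>_. bernoulli_pmf p))
               (\<lambda>s. central_binom_prob (card (active_groups 1 m s)))"
    using prob_row_sum_small_le_active[where k=1 and m=m and x=x and P="bernoulli_pmf p", OF a]
      counts
    unfolding \<rho>_def by auto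
  then have row: "\<rho> \<le> 1 - q / 2"
    using expectation_central_binom_prob_active_single[OF _ p] unfolding q_def by simp
  have "measure_pmf.prob (bernoulli_matrix n p) ?E
      \<le> measure_pmf.prob (bernoulli_matrix n p)
           {A. real n - q * real n / 50 \<le> real (card {i\<in>{..<n}. \<bar>mat_vec n A x i\<bar> < a})}"
    unfolding q_def
    by (intro measure_pmf.finite_measure_mono) (auto dest: card_small_coords_of_norm_lt[OF a])
  also have "\<dots> \<le> (1 + (2 - 1) * (1 - q / 2)) ^ n / 2 powr (real n - q * real n / 50)"
    using row by (intro prob_many_small_rows_le) (simp_all add: \<rho>_def)
  also have "\<dots> \<le> exp (- (q * real n / 40))"
    using first_bound_arith[of q n] one_hot_prob_nonneg_le_1[OF p] unfolding q_def by simp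
  finally show ?thesis unfolding q_def .
qed

lemma prob_norm_small_le_second:
  fixes x :: "nat \<Rightarrow> real"
  assumes p: "0 \<le> p" "p \<le> 1" and a: "a > 0"
    and counts: "k * m \<le> card {i\<in>{..<n}. 3 * a \<le> \<bar>x i\<bar>}" "k * m \<le> card {i\<in>{..<n}. \<bar>x i\<bar> < a}"
    and L: "real k * one_hot_prob m p \<ge> 4096"
  shows "measure_pmf.prob (bernoulli_matrix n p)
           {A. euclid_norm n (mat_vec n A x) < sqrt (real n / 4) * a}
         \<le> 2 * exp (- (ln (real k * one_hot_prob m p) * real n / 12))"
    (is "measure_pmf.prob _ ?E \<le> _")
proof -
  define q where "q = one_hot_prob m p"
  define L where "L = real k * q"
  define \<rho> where
    "\<rho> = measure_pmf.prob (Pi_pmf {..<n} False (\<lambda>_. bernoulli_pmf p)) {r. \<bar>row_sum n x r\<bar> < a}"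
  have q: "0 \<le> q" "q \<le> 1" unfolding q_def by (rule one_hot_prob_nonneg_le_1[OF p])+
  have L4: "L \<ge> 4096" using assms(6) unfolding L_def q_def .
  obtain W where "finite W"
    and row: "\<rho> \<le> measure_pmf.expectation (Pi_pmf (group_coords W k m) False (\<lambda>_. bernoulli_pmf p))
                (\<lambda>s. central_binom_prob (card (active_groups k m s)))"
    using prob_row_sum_small_le_active[where k=k and m=m and x=x and P="bernoulli_pmf p", OF a]
      counts
    unfolding \<rho>_def by auto
  \<comment> \<open>split the central binomial bound at \<open>j = \<lfloor>L/4\<rfloor>\<close> and use \<open>s = L^(1/3)\<close> in Markov's inequality\<close>
  then have "\<rho> \<le> 2 ^ nat \<lfloor>L/4\<rfloor> * (1 - q / 2) ^ k + 1 / sqrt (real (nat \<lfloor>L/4\<rfloor>) + 1)"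
    using expectation_central_binom_prob_active_le[OF _ p, where j="nat \<lfloor>L/4\<rfloor>"] unfolding q_def
    by (meson order_trans)
  also have "\<dots> \<le> 3 / sqrt L" by (rule split_bound_arith[OF L4 q L_def])
  finally have \<rho>_le: "\<rho> \<le> 3 / sqrt L" .
  have "measure_pmf.prob (bernoulli_matrix n p) ?E
      \<le> measure_pmf.prob (bernoulli_matrix n p)
           {A. 3 * real n / 4 \<le> real (card {i\<in>{..<n}. \<bar>mat_vec n A x i\<bar> < a})}"
    by (intro measure_pmf.finite_measure_mono) (auto dest: card_small_coords_of_norm_lt[OF a])
  also have "\<dots> \<le> (1 + (L powr (1/3) - 1) * \<rho>) ^ n / (L powr (1/3)) powr (3 * real n / 4)"
    using L4 by (intro prob_many_small_rows_le) (simp_all add: \<rho>_def ge_one_powr_ge_zero)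
  also have "\<dots> \<le> 2 * exp (- (ln L * real n / 12))"
    by (rule second_bound_arith[OF L4 _ \<rho>_le]) (simp add: \<rho>_def)
  finally show ?thesis unfolding L_def q_def .
qed

lemma real_div_lt_double_div:
  assumes "0 < m0" "m0 \<le> m1"
  shows "real m1 / real m0 < 2 * real (m1 div m0)"
proof -
  have k1: "1 \<le> m1 div m0"
    using assms by (simp add: Suc_le_eq div_greater_zero_iff)
  have "m1 div m0 * m0 + m1 mod m0 = m1" by (rule div_mult_mod_eq)
  then have "m1 < m1 div m0 * m0 + m0"
    using mod_less_divisor[OF assms(1), of m1] by linarith
  also have "\<dots> \<le> 2 * (m1 div m0) * m0" using mult_le_mono1[OF k1, of m0] by simp
  finally have "real m1 < real (2 * (m1 div m0) * m0)" by (simp only: of_nat_less_iff)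
  then have "real m1 < 2 * real (m1 div m0) * real m0" by simp
  then show ?thesis using assms(1) by (simp add: divide_less_eq)
qed

lemma small_ball_bounds:
  fixes x :: "nat \<Rightarrow> real"
  assumes p: "0 < p" "p < 1" and m: "0 < m0" "m0 \<le> m1" "2 * m1 \<le> n" and a: "0 < a"
    and r: "rearr n x m1 = 3 * a" "rearr n x m1 > 3 * rearr n x (n - m1)"
  shows "let q = 2 * real m0 * p * (1 - p) ^ (2 * m0 - 1) in
       measure_pmf.prob (bernoulli_matrix n p)
          {A. euclid_norm n (mat_vec n A x) < sqrt (q * real n / 50) * a}
        \<le> exp (- (q * real n / 40))
       \<and>
       (real m1 / real m0 * q > 10000 \<longrightarrow>
         measure_pmf.prob (bernoulli_matrix n p)
            {A. euclid_norm n (mat_vec n A x) < sqrt (real n / 4) * a}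
          \<le> 2 * exp (- (ln (real (m1 div m0) * q) * real n / 12)))"
proof -
  have p': "0 \<le> p" "p \<le> 1" using p by auto
  have counts: "m1 \<le> card {i\<in>{..<n}. 3 * a \<le> \<bar>x i\<bar>}" "m1 \<le> card {i\<in>{..<n}. \<bar>x i\<bar> < a}"
    using card_big_small_of_rearr[of m1 n x a] m r by auto
  have k_m0: "m1 div m0 * m0 \<le> m1" by (rule div_times_less_eq_dividend)
  have large: "real (m1 div m0) * one_hot_prob m0 p \<ge> 4096"
    if "real m1 / real m0 * one_hot_prob m0 p > 10000"
  proof -
    \<comment> \<open>any \<open>C \<ge> 8192\<close> would do, since \<open>m1 / m0 < 2 * (m1 div m0)\<close>\<close>
    have "real m1 / real m0 * one_hot_prob m0 p \<le> 2 * real (m1 div m0) * one_hot_prob m0 p"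
      using real_div_lt_double_div[OF m(1,2)] one_hot_prob_nonneg_le_1[OF p', of m0]
      by (intro mult_right_mono) auto
    then show ?thesis using that by linarith
  qed
  show ?thesis
    unfolding Let_def one_hot_prob_def[symmetric]
    using prob_norm_small_le_first[OF p' a] prob_norm_small_le_second[OF p' a _ _ large]
      counts m(2) k_m0 by (meson order_trans)
qed

theorem mainTheorem12:
  "\<exists>C>0. \<exists>N. \<forall>n\<ge>N. \<forall>(p::real) (m0::nat) (m1::nat) (a::real) (x::nat \<Rightarrow> real).
     0 < p \<and> p < 1 \<and> 0 < m0 \<and> m0 \<le> m1 \<and> 2 * m1 \<le> n \<and> 0 < a \<and>
     rearr n x m1 = 3 * a \<and> rearr n x m1 > 3 * rearr n x (n - m1) \<longrightarrow>
     (let q = 2 * real m0 * p * (1 - p) ^ (2 * m0 - 1) in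
       measure_pmf.prob (bernoulli_matrix n p)
          {A. euclid_norm n (mat_vec n A x) < sqrt (q * real n / 50) * a}
        \<le> exp (- (q * real n / 40))
       \<and>
       (real m1 / real m0 * q > C \<longrightarrow>
         measure_pmf.prob (bernoulli_matrix n p)
            {A. euclid_norm n (mat_vec n A x) < sqrt (real n / 4) * a}
          \<le> 2 * exp (- (ln (real (m1 div m0) * q) * real n / 12))))"
  by (intro exI[of _ "10000::real"] conjI exI[of _ "0::nat"] allI impI)
    (simp, (elim conjE, rule small_ball_bounds; assumption))

end
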